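(* Let $G$ be a finite group and $H$ a normal subgroup of $G$ with $|H|$ odd. Then $\Gamma_{G,H}$ admits a perfect code.
   Context: For a normal subgroup $H$ of a finite group $G$ with identity $e$, the subgroup sum graph $\Gamma_{G,H}$ is the simple undirected graph with vertex set $G$ in which distinct vertices $x,y$ are adjacent if and only if $xy\in H\setminus\{e\}$. A perfect code in a graph is a set $C$ of vertices that is independent and such that every vertex not in $C$ is adjacent to exactly one vertex of $C$. *)

theory Defs
  imports "HOL-Algebra.Algebra"
begin

definition subgroup_sum_adj :: "('a, 'b) monoid_scheme \<Rightarrow> 'a set \<Rightarrow> 'a \<Rightarrow> 'a \<Rightarrow> bool" where
  "subgroup_sum_adj G H x y \<longleftrightarrow>
     x \<in> carrier G \<and> y \<in> carrier G \<and> x \<noteq> y \<and> x \<otimes>\<^bsub>G\<^esub> y \<in> H - {\<one>\<^bsub>G\<^esub>}"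

definition perfect_code :: "'a set \<Rightarrow> ('a \<Rightarrow> 'a \<Rightarrow> bool) \<Rightarrow> 'a set \<Rightarrow> bool" where
  "perfect_code V E C \<longleftrightarrow>
     C \<subseteq> V \<and>
     (\<forall>x\<in>C. \<forall>y\<in>C. \<not> E x y) \<and>
     (\<forall>v\<in>V - C. \<exists>!c. c \<in> C \<and> E v c)"

end

theory Submission
  imports Defs
begin

text \<open>Distinct vertices \<open>x\<close>, \<open>y\<close> are adjacent exactly when \<open>Hy = (Hx)\<inverse>\<close> and
  \<open>y \<noteq> x\<inverse>\<close>. Group the cosets of \<open>H\<close> into pairs \<open>{K, K\<inverse>}\<close> and choose in each pair
  an element \<open>r\<close>, with \<open>r\<^sup>2 = 1\<close> whenever \<open>K = K\<inverse>\<close>: then inversion is an involution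
  of the coset \<open>K\<close>, which has the odd size \<open>|H|\<close>, so it has a fixed point. The elements
  \<open>r\<close> and \<open>r\<inverse>\<close> so chosen form a perfect code: a vertex outside it can only be adjacent
  to the \<open>r\<close> or \<open>r\<inverse>\<close> of its own pair, is adjacent to the one lying in the inverse of
  its coset, and would be adjacent to both only if \<open>Hr = Hr\<inverse>\<close> and \<open>r \<noteq> r\<inverse>\<close>,
  which the choice of \<open>r\<close> rules out.\<close>

lemma odd_card_involution_has_fixpoint:
  assumes "finite A" "odd (card A)"
    and "\<And>x. x \<in> A \<Longrightarrow> f x \<in> A" "\<And>x. x \<in> A \<Longrightarrow> f (f x) = x"
  shows "\<exists>x\<in>A. f x = x"
  using assms
proof (induction "card A" arbitrary: A rule: less_induct)
  case less
  from \<open>odd (card A)\<close> obtain z where z: "z \<in> A"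
    by fastforce
  show ?case
  proof (cases "f z = z")
    case True
    with z show ?thesis by blast
  next
    case False
    let ?B = "A - {z, f z}"
    have "card ?B = card A - 2"
      using False z less.prems(1,3) by (simp add: card_Diff_subset)
    moreover have "card A \<ge> 2"
      using False z less.prems(1,3) by (metis card_2_iff card_mono empty_subsetI insert_subset)
    ultimately have "card ?B < card A" "odd (card ?B)"
      using less.prems(2) by auto
    moreover have "f x \<in> ?B" if "x \<in> ?B" for x
    proof -
      have "f x \<noteq> z" "f x \<noteq> f z"
        using that z less.prems(4) by (metis Diff_iff insertCI)+
      then show ?thesis
        using that less.prems(3) by blast
    qed
    ultimately have "\<exists>x\<in>?B. f x = x"
      using less.prems(1,4) by (intro less.hyps) auto
    then show ?thesis by blast
  qed
qed

context group
begin

lemma rcos_eq_iff_mult_inv_mem: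
  assumes "subgroup H G" "a \<in> carrier G" "b \<in> carrier G"
  shows "H #> a = H #> b \<longleftrightarrow> a \<otimes> inv b \<in> H"
proof
  assume "H #> a = H #> b"
  then have "a \<in> H #> b"
    using assms rcos_self by blast
  then show "a \<otimes> inv b \<in> H"
    using assms subgroup.rcos_module[OF _ is_group] by blast
next
  assume "a \<otimes> inv b \<in> H"
  then have "a \<in> H #> b"
    using assms subgroup.rcos_module[OF _ is_group] by blast
  then show "H #> a = H #> b"
    using assms repr_independence by metis
qed

lemma subgroup_sum_adj_iff_rcos_eq:
  assumes "subgroup H G" "v \<in> carrier G" "c \<in> carrier G"
  shows "subgroup_sum_adj G H v c \<longleftrightarrow> v \<noteq> c \<and> c \<noteq> inv v \<and> H #> v = H #> inv c"
proof -
  have "v \<otimes> c = \<one> \<longleftrightarrow> c = inv v"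
    using assms(2,3) inv_equality r_inv by (metis inv_inv)
  then show ?thesis
    using assms rcos_eq_iff_mult_inv_mem[of H v "inv c"] by (auto simp: subgroup_sum_adj_def)
qed

end

context normal
begin

lemma rcos_eq_imp_rcos_inv_eq:
  assumes "a \<in> carrier G" "b \<in> carrier G" "H #> a = H #> b"
  shows "H #> inv a = H #> inv b"
  using assms(3) rcos_inv[OF assms(1)] rcos_inv[OF assms(2)] by metis

definition coset_pair :: "'a \<Rightarrow> 'a set set"
  where "coset_pair a = {H #> a, H #> inv a}"

lemma coset_pair_inv [simp]: "a \<in> carrier G \<Longrightarrow> coset_pair (inv a) = coset_pair a"
  by (auto simp: coset_pair_def)

lemma coset_pair_eq_iff:
  assumes "a \<in> carrier G" "b \<in> carrier G"
  shows "coset_pair a = coset_pair b \<longleftrightarrow> H #> a \<in> coset_pair b"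
  using assms rcos_eq_imp_rcos_inv_eq[of a b] rcos_eq_imp_rcos_inv_eq[of a "inv b"]
  by (auto simp: coset_pair_def)

lemma exists_coset_pair_elem_with_trivial_square:
  assumes "finite (carrier G)" "odd (card H)" "a \<in> carrier G"
  shows "\<exists>z. z \<in> carrier G \<and> coset_pair z = coset_pair a \<and> (z \<otimes> z \<in> H \<longrightarrow> z \<otimes> z = \<one>)"
proof (cases "a \<otimes> a \<in> H")
  case False
  with assms(3) show ?thesis by blast
next
  case True
  have "H #> a = H #> inv a"
    using True assms(3) by (simp add: rcos_eq_iff_mult_inv_mem[OF subgroup_axioms])
  then have inv_closed_coset: "inv x \<in> H #> a" if "x \<in> H #> a" for x
    using that rcos_inv[OF assms(3)] by (auto simp: SET_INV_def)
  have coset_subset: "H #> a \<subseteq> carrier G"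
    using r_coset_subset_G[OF subset assms(3)] .
  have "card (H #> a) = card H"
    using card_rcosets_equal[OF rcosetsI[OF subset assms(3)] subset] by simp
  then obtain z where z: "z \<in> H #> a" "inv z = z"
    using odd_card_involution_has_fixpoint[of "H #> a" "\<lambda>x. inv x"] assms(1,2) inv_closed_coset
      coset_subset finite_subset by (metis inv_inv subsetD)
  have "z \<in> carrier G"
    using z(1) coset_subset by blast
  moreover have "coset_pair z = coset_pair a"
  proof -
    have "H #> z = H #> a"
      using repr_independence[OF z(1) assms(3) subgroup_axioms] by simp
    then show ?thesis
      using rcos_eq_imp_rcos_inv_eq[OF \<open>z \<in> carrier G\<close> assms(3)] by (simp add: coset_pair_def)
  qed
  moreover have "z \<otimes> z = \<one>"
    using \<open>z \<in> carrier G\<close> r_inv z(2) by metis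
  ultimately show ?thesis by blast
qed

end

locale odd_order_normal = normal +
  assumes finite_carrier: "finite (carrier G)"
    and odd_card: "odd (card H)"
begin

definition rep :: "'a \<Rightarrow> 'a"
  where "rep a =
    (SOME z. z \<in> carrier G \<and> coset_pair z = coset_pair a \<and> (z \<otimes> z \<in> H \<longrightarrow> z \<otimes> z = \<one>))"

lemma rep:
  assumes "a \<in> carrier G"
  shows rep_closed: "rep a \<in> carrier G"
    and coset_pair_rep: "coset_pair (rep a) = coset_pair a"
    and rep_square: "rep a \<otimes> rep a \<in> H \<Longrightarrow> rep a \<otimes> rep a = \<one>"
  using someI_ex[OF exists_coset_pair_elem_with_trivial_square[OF finite_carrier odd_card assms]]
  unfolding rep_def by simp_all

definition code :: "'a set"
  where "code = (\<Union>a\<in>carrier G. {rep a, inv (rep a)})"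

lemma code_subset: "code \<subseteq> carrier G"
  by (auto simp: code_def rep_closed)

lemma inv_mem_code: "c \<in> code \<Longrightarrow> inv c \<in> code"
  by (auto simp: code_def rep_closed)

lemma mem_code_rcos_cases:
  assumes "c \<in> code" "v \<in> carrier G" "H #> c \<in> coset_pair v"
  shows "c = rep v \<or> c = inv (rep v)"
proof -
  obtain a where a: "a \<in> carrier G" "c = rep a \<or> c = inv (rep a)"
    using assms(1) by (auto simp: code_def)
  then have "coset_pair a = coset_pair c"
    using rep_closed coset_pair_rep by auto
  also have "\<dots> = coset_pair v"
    using assms code_subset coset_pair_eq_iff by blast
  finally have "rep a = rep v"
    by (simp add: rep_def)
  with a show ?thesis by simp
qed

lemma code_independent:
  assumes "x \<in> code" "y \<in> code"
  shows "\<not> subgroup_sum_adj G H x y"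
proof
  assume adj: "subgroup_sum_adj G H x y"
  have carrier: "x \<in> carrier G" "y \<in> carrier G"
    using assms code_subset by auto
  with adj have "x \<noteq> y" "y \<noteq> inv x" "H #> x = H #> inv y"
    using subgroup_sum_adj_iff_rcos_eq[OF subgroup_axioms] by auto
  then have "x = rep y \<or> x = inv (rep y)" "y = rep y \<or> y = inv (rep y)"
    using assms carrier mem_code_rcos_cases by (auto simp: coset_pair_def)
  with \<open>x \<noteq> y\<close> \<open>y \<noteq> inv x\<close> carrier show False
    by (metis inv_inv)
qed

lemma code_dominates:
  assumes v: "v \<in> carrier G" "v \<notin> code"
  shows "\<exists>!c. c \<in> code \<and> subgroup_sum_adj G H v c"
proof -
  let ?r = "rep v"
  have r: "?r \<in> carrier G" "?r \<in> code" "inv ?r \<in> code"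
    using v(1) rep_closed by (auto simp: code_def)
  have adj_iff: "subgroup_sum_adj G H v c \<longleftrightarrow> H #> v = H #> inv c" if "c \<in> code" for c
    using that v code_subset inv_mem_code subgroup_sum_adj_iff_rcos_eq[OF subgroup_axioms]
    by (metis inv_inv subsetD)
  have neighbour_cases: "c = ?r \<or> c = inv ?r" if "c \<in> code" "subgroup_sum_adj G H v c" for c
  proof -
    have "c \<in> carrier G"
      using that(1) code_subset by blast
    with that v(1) have "H #> c = H #> inv v"
      using adj_iff rcos_eq_imp_rcos_inv_eq by (metis inv_closed inv_inv)
    then show ?thesis
      using that(1) v(1) mem_code_rcos_cases by (simp add: coset_pair_def)
  qed
  have "H #> v \<in> coset_pair ?r"
    using v(1) coset_pair_rep by (simp add: coset_pair_def)
  then obtain c where c: "c \<in> code" "H #> v = H #> inv c"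
    using r by (auto simp: coset_pair_def)
  moreover have "d = c" if "d \<in> code" "subgroup_sum_adj G H v d" for d
  proof (rule ccontr)
    assume "d \<noteq> c"
    then have "H #> ?r = H #> inv ?r"
      using neighbour_cases that c adj_iff by (metis r(1) inv_inv)
    then have "?r \<otimes> ?r = \<one>"
      using rep_square[OF v(1)] r(1) rcos_eq_iff_mult_inv_mem[OF subgroup_axioms] by simp
    then have "inv ?r = ?r"
      using r(1) inv_equality by blast
    then show False
      using \<open>d \<noteq> c\<close> neighbour_cases that c adj_iff by metis
  qed
  ultimately show ?thesis
    using adj_iff by blast
qed

lemma perfect_code_code: "perfect_code (carrier G) (subgroup_sum_adj G H) code"
  unfolding perfect_code_def using code_subset code_independent code_dominates by blast

end

theorem corollary3p2:
  fixes G :: "('a, 'b) monoid_scheme" and H :: "'a set"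
  assumes "group G"
    and "finite (carrier G)"
    and "H \<lhd> G"
    and "odd (card H)"
  shows "\<exists>C. perfect_code (carrier G) (subgroup_sum_adj G H) C"
proof -
  interpret odd_order_normal H G
    using assms(2-4) by (simp add: odd_order_normal_def odd_order_normal_axioms_def)
  show ?thesis
    using perfect_code_code by blast
qed

end
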